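(* Let $b\ge 2$ and $n\ge 1$ be integers. Then $$\mathrm{Ap}(T_b(n),s_0)=\Big\{\sum_{j=1}^{n+1} t_j s_j \;:\; (t_1,\dots,t_{n+1})\in R_b(n)\Big\}.$$
   Context: For integers $b\ge 2$, $n\ge 0$, $i\ge0$ put $s_i=(b+1)b^{n+i}-1$ and $T_b(n)=\langle\{s_i:i\in\mathbb{N}\}\rangle$ (the submonoid of $(\mathbb{N},+)$ generated by the $s_i$; it is a numerical semigroup). For a numerical semigroup $S$ and $x\in S\setminus\{0\}$, the Apéry set is $\mathrm{Ap}(S,x)=\{s\in S : s-x\notin S\}$. $R_b(n)$ is the set of tuples $(t_1,\dots,t_{n+1})\in\{0,1,\dots,b\}^{n+1}$ satisfying: (i) $t_{n+1}\le b-1$; (ii) if $t_j=b$ for some $j$, then $t_i=0$ for all $i<j$; (iii) if $t_{n+1}=b-1$, then $t_n\le b-1$, and if moreover $t_n=b-1$, then $t_1=\dots=t_{n-1}=0$. *)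

theory Defs
  imports Main
begin

inductive_set monoid_gen :: "nat set \<Rightarrow> nat set" for A :: "nat set" where
  zero: "0 \<in> monoid_gen A"
| add: "x \<in> monoid_gen A \<Longrightarrow> a \<in> A \<Longrightarrow> x + a \<in> monoid_gen A"

definition s_gen :: "nat \<Rightarrow> nat \<Rightarrow> nat \<Rightarrow> nat" where
  "s_gen b n i = (b + 1) * b ^ (n + i) - 1"

definition T_sg :: "nat \<Rightarrow> nat \<Rightarrow> nat set" where
  "T_sg b n = monoid_gen (range (s_gen b n))"

definition Apery :: "nat set \<Rightarrow> nat \<Rightarrow> nat set" where
  "Apery S x = {s \<in> S. \<not> (s \<ge> x \<and> s - x \<in> S)}"

text \<open>Tuples (t_1,...,t_{n+1}) represented as functions on {1..n+1}, zero elsewhere.\<close>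
definition R_set :: "nat \<Rightarrow> nat \<Rightarrow> (nat \<Rightarrow> nat) set" where
  "R_set b n = {t. (\<forall>j. j \<notin> {1..n+1} \<longrightarrow> t j = 0)
     \<and> (\<forall>j\<in>{1..n+1}. t j \<le> b)
     \<and> t (n+1) \<le> b - 1
     \<and> (\<forall>j\<in>{1..n+1}. t j = b \<longrightarrow> (\<forall>i\<in>{1..<j}. t i = 0))
     \<and> (t (n+1) = b - 1 \<longrightarrow> t n \<le> b - 1 \<and>
          (t n = b - 1 \<longrightarrow> (\<forall>i\<in>{1..n-1}. t i = 0)))}"

end

theory Submission
  imports Defs "HOL-Number_Theory.Cong"
begin

text \<open>Write \<open>K = s\<^sub>1 - s\<^sub>0 = (b + 1) b\<^sup>n (b - 1)\<close> and \<open>e\<^sub>i = (b\<^sup>i - 1) / (b - 1) = repunit b i\<close>, so that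
  \<open>s\<^sub>i = s\<^sub>0 + K e\<^sub>i\<close>. A sum of \<open>D\<close> generators is \<open>D s\<^sub>0 + K G\<close> where \<open>D + (b - 1) G\<close> is a sum
  of \<open>D\<close> powers of \<open>b\<close>, so its base-\<open>b\<close> digit sum is at most \<open>D\<close>. The tuples in \<open>R\<^sub>b(n)\<close> are
  exactly the greedy expansions \<open>g = \<Sum> t\<^sub>j e\<^sub>j\<close> of the residues \<open>0 \<le> g < s\<^sub>0\<close>, and a greedy
  expansion uses the fewest generators: if \<open>D + (b - 1) g\<close> has digit sum at most \<open>D\<close>, then
  \<open>\<Sum> t\<^sub>j \<le> D\<close>. As \<open>K\<close> and \<open>s\<^sub>0\<close> are coprime, this makes \<open>\<Sum> t\<^sub>j s\<^sub>j\<close> the least element of the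
  semigroup in its residue class modulo \<open>s\<^sub>0\<close>.\<close>

section \<open>Digit sums and repunits\<close>

function digit_sum :: "nat \<Rightarrow> nat \<Rightarrow> nat" where
  "digit_sum b x = (if b \<le> 1 \<or> x = 0 then 0 else x mod b + digit_sum b (x div b))"
  by auto
termination by (relation "measure snd") auto

declare digit_sum.simps [simp del]

lemma digit_sum_0 [simp]: "digit_sum b 0 = 0"
  by (simp add: digit_sum.simps)

lemma digit_sum_rec: "b \<ge> 2 \<Longrightarrow> digit_sum b x = x mod b + digit_sum b (x div b)"
  by (cases "x = 0") (simp_all add: digit_sum.simps)

lemma digit_sum_less: "b \<ge> 2 \<Longrightarrow> c < b \<Longrightarrow> digit_sum b c = c"
  by (simp add: digit_sum_rec)

lemma digit_sum_add_mult_power: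
  assumes "b \<ge> 2" "a < b ^ k"
  shows "digit_sum b (a + b ^ k * c) = digit_sum b a + digit_sum b c"
  using assms(2)
proof (induction k arbitrary: a)
  case (Suc k)
  have "a div b < b ^ k"
    using Suc.prems assms(1) by (simp add: div_less_iff_less_mult mult.commute)
  moreover have "(a + b ^ Suc k * c) div b = a div b + b ^ k * c"
    using assms(1) by (simp add: mult.assoc)
  ultimately show ?case
    using Suc.IH[of "a div b"] digit_sum_rec[OF assms(1), of a]
      digit_sum_rec[OF assms(1), of "a + b ^ Suc k * c"] by (simp add: mult.assoc)
qed simp

lemma digit_sum_Suc_le:
  assumes "b \<ge> 2" shows "digit_sum b (Suc x) \<le> Suc (digit_sum b x)"
  using assms
proof (induction x rule: less_induct)
  case (less x)
  show ?case
  proof (cases "x mod b = b - 1")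
    case True
    then have "x \<noteq> 0"
      using less.prems by (cases "x = 0") auto
    moreover have "Suc x mod b = 0" "Suc x div b = Suc (x div b)"
      using True less.prems by (simp_all add: mod_Suc div_Suc)
    ultimately show ?thesis
      using less.IH[of "x div b"] less.prems True
        digit_sum_rec[of b x] digit_sum_rec[of b "Suc x"] by simp
  next
    case False
    then have "Suc x mod b = Suc (x mod b)" "Suc x div b = x div b"
      using less.prems mod_less_divisor[of b x] by (simp_all add: mod_Suc div_Suc)
    then show ?thesis
      using less.prems digit_sum_rec[of b x] digit_sum_rec[of b "Suc x"] by simp
  qed
qed

lemma digit_sum_add_le: "b \<ge> 2 \<Longrightarrow> digit_sum b (x + k) \<le> digit_sum b x + k"
  by (induction k) (auto intro: order_trans[OF digit_sum_Suc_le])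

text \<open>Adding a power of \<open>b\<close> raises the digit sum by at most one: it is a unit increment of the
  part of \<open>x\<close> above position \<open>i\<close>.\<close>
lemma digit_sum_add_power_le:
  assumes "b \<ge> 2" shows "digit_sum b (x + b ^ i) \<le> digit_sum b x + 1"
proof -
  define a where "a = x mod b ^ i"
  define c where "c = x div b ^ i"
  have x: "x = a + b ^ i * c" and a: "a < b ^ i"
    using assms by (simp_all add: a_def c_def)
  have "digit_sum b (x + b ^ i) = digit_sum b a + digit_sum b (c + 1)"
    using digit_sum_add_mult_power[OF assms a, of "c + 1"] by (simp add: x algebra_simps)
  also have "\<dots> \<le> digit_sum b a + digit_sum b c + 1"
    using digit_sum_add_le[OF assms, of c 1] by simp
  also have "\<dots> = digit_sum b x + 1"
    using digit_sum_add_mult_power[OF assms a] x by simp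
  finally show ?thesis .
qed

lemma digit_sum_power_minus_one:
  assumes "b \<ge> 2" shows "digit_sum b (b ^ k - 1) = k * (b - 1)"
proof (induction k)
  case (Suc k)
  have "b ^ Suc k - 1 = (b - 1) + b ^ 1 * (b ^ k - 1)"
    using assms by (simp add: algebra_simps diff_mult_distrib2 Suc_leI)
  then show ?case
    using Suc digit_sum_add_mult_power[OF assms, of "b - 1" 1 "b ^ k - 1"]
      digit_sum_less[OF assms, of "b - 1"] assms by simp
qed simp

lemma diff_one_mult_add_self: "b \<ge> 1 \<Longrightarrow> (b - 1) * x + x = b * (x :: nat)"
  by (cases b) simp_all

fun repunit :: "nat \<Rightarrow> nat \<Rightarrow> nat" where
  "repunit b 0 = 0"
| "repunit b (Suc j) = b * repunit b j + 1"

lemma power_eq_repunit: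
  assumes "b \<ge> 1" shows "b ^ j = (b - 1) * repunit b j + 1"
proof -
  obtain c where "b = Suc c" using assms by (cases b) auto
  then show ?thesis by (induction j) (auto simp: algebra_simps)
qed

lemma repunit_pos: "j \<ge> 1 \<Longrightarrow> repunit b j \<ge> 1"
  by (cases j) auto

section \<open>Canonical repunit expansions\<close>

definition canonical_digits :: "nat \<Rightarrow> nat \<Rightarrow> (nat \<Rightarrow> nat) \<Rightarrow> bool" where
  "canonical_digits b N t \<longleftrightarrow>
     (\<forall>j\<in>{1..N}. t j \<le> b) \<and> (\<forall>j\<in>{1..N}. t j = b \<longrightarrow> (\<forall>i\<in>{1..<j}. t i = 0))"

lemma canonical_digits_0 [simp]: "canonical_digits b 0 t"
  by (simp add: canonical_digits_def)

lemma canonical_digits_cong: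
  "(\<And>j. j \<in> {1..N} \<Longrightarrow> t j = t' j) \<Longrightarrow> canonical_digits b N t = canonical_digits b N t'"
  unfolding canonical_digits_def by (simp add: Ball_def)

lemma canonical_digits_Suc:
  "canonical_digits b (Suc N) t \<longleftrightarrow>
     canonical_digits b N t \<and> t (Suc N) \<le> b \<and> (t (Suc N) = b \<longrightarrow> (\<forall>i\<in>{1..N}. t i = 0))"
  unfolding canonical_digits_def
  by (auto simp: atLeastAtMostSuc_conv atLeastLessThanSuc_atLeastAtMost)

lemma repunit_sum_eq_0_iff:
  "(\<Sum>j=1..N. t j * repunit b j) = 0 \<longleftrightarrow> (\<forall>j\<in>{1..N}. t j = 0)"
  using repunit_pos[of _ b] by fastforce

lemma canonical_digits_repunit_sum_le:
  assumes "b \<ge> 1" "canonical_digits b N t"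
  shows "(\<Sum>j=1..N. t j * repunit b j) \<le> b * repunit b N"
  using assms(2)
proof (induction N)
  case (Suc N)
  then have IH: "(\<Sum>j=1..N. t j * repunit b j) \<le> b * repunit b N"
    and top: "t (Suc N) \<le> b" "t (Suc N) = b \<Longrightarrow> \<forall>i\<in>{1..N}. t i = 0"
    by (simp_all add: canonical_digits_Suc)
  show ?case
  proof (cases "t (Suc N) = b")
    case True
    then show ?thesis using top(2) by simp
  next
    case False
    then have "t (Suc N) * repunit b (Suc N) \<le> (b - 1) * repunit b (Suc N)"
      using top(1) by (intro mult_right_mono) simp_all
    moreover have "b * repunit b N + (b - 1) * repunit b (Suc N) \<le> b * repunit b (Suc N)"
      using assms(1) by (cases b) (simp_all add: algebra_simps)
    moreover have "(\<Sum>j=1..Suc N. t j * repunit b j)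
        = (\<Sum>j=1..N. t j * repunit b j) + t (Suc N) * repunit b (Suc N)"
      by (simp del: repunit.simps)
    ultimately show ?thesis
      using IH by linarith
  qed
qed simp

text \<open>Greedy expansion: the top digit is the quotient by the largest repunit.\<close>
lemma ex_canonical_digits:
  assumes "b \<ge> 1" "G \<le> b * repunit b N"
  shows "\<exists>t. canonical_digits b N t \<and> (\<forall>j. j \<notin> {1..N} \<longrightarrow> t j = 0)
           \<and> (\<Sum>j=1..N. t j * repunit b j) = G"
  using assms(2)
proof (induction N arbitrary: G)
  case 0
  then show ?case by (intro exI[of _ "\<lambda>_. 0"]) simp
next
  case (Suc N)
  define e where "e = repunit b (Suc N)"
  define q where "q = G div e"
  define r where "r = G mod e"
  have e_pos: "e \<ge> 1" by (simp add: e_def)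
  have G: "G = q * e + r" by (simp add: q_def r_def)
  have "r < e" using e_pos by (simp add: r_def)
  then obtain t0 where t0: "canonical_digits b N t0" "\<forall>j. j \<notin> {1..N} \<longrightarrow> t0 j = 0"
    "(\<Sum>j=1..N. t0 j * repunit b j) = r"
    using Suc.IH[of r] by (auto simp: e_def)
  have "q * e \<le> b * e" using G Suc.prems by (simp add: e_def)
  then have q_le: "q \<le> b" using e_pos by simp
  have q_eq: "q = b \<Longrightarrow> r = 0" using G Suc.prems by (simp add: e_def)
  define t where "t = t0(Suc N := q)"
  have lower: "(\<Sum>j=1..N. t j * repunit b j) = r"
    using t0(3) by (simp add: t_def)
  have "\<forall>i\<in>{1..N}. t0 i = 0" if "q = b"
    using repunit_sum_eq_0_iff t0(3) q_eq[OF that] by metis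
  moreover have "canonical_digits b N t"
    using t0(1) canonical_digits_cong[of N t t0 b] by (simp add: t_def)
  ultimately have "canonical_digits b (Suc N) t"
    using q_le by (simp add: canonical_digits_Suc t_def)
  moreover have "\<forall>j. j \<notin> {1..Suc N} \<longrightarrow> t j = 0"
    using t0(2) by (auto simp: t_def)
  moreover have "(\<Sum>j=1..Suc N. t j * repunit b j) = G"
    using lower G by (simp add: t_def e_def)
  ultimately show ?case by blast
qed

lemma canonical_digits_power_sum_le:
  assumes "b \<ge> 1" "canonical_digits b N t"
  shows "(\<Sum>j=1..N. t j * b ^ j) \<le> b ^ Suc N"
  using assms(2)
proof (induction N)
  case (Suc N)
  then have IH: "(\<Sum>j=1..N. t j * b ^ j) \<le> b ^ Suc N"
    and top: "t (Suc N) \<le> b" "t (Suc N) = b \<Longrightarrow> \<forall>i\<in>{1..N}. t i = 0"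
    by (simp_all add: canonical_digits_Suc)
  show ?case
  proof (cases "t (Suc N) = b")
    case True
    then show ?thesis using top(2) by simp
  next
    case False
    then have "t (Suc N) * b ^ Suc N \<le> (b - 1) * b ^ Suc N"
      using top(1) by (intro mult_right_mono) simp_all
    moreover have "b ^ Suc N + (b - 1) * b ^ Suc N = b ^ Suc (Suc N)"
      using assms(1) by (cases b) simp_all
    moreover have "(\<Sum>j=1..Suc N. t j * b ^ j) = (\<Sum>j=1..N. t j * b ^ j) + t (Suc N) * b ^ Suc N"
      by simp
    ultimately show ?thesis
      using IH by linarith
  qed
qed (use assms in simp)

text \<open>Only the lowest nonzero digit \<open>t\<^sub>j\<close> may equal \<open>b\<close>; subtracting one turns the \<open>j\<close> zeros below
  it into digits \<open>b - 1\<close>, which make up for the carry.\<close>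
lemma canonical_digits_count_le_digit_sum:
  assumes "b \<ge> 2" "canonical_digits b N t" "(\<Sum>j=1..N. t j) \<ge> 1"
  shows "(\<Sum>j=1..N. t j) \<le> digit_sum b ((\<Sum>j=1..N. t j * b ^ j) - 1)"
  using assms(2,3)
proof (induction N)
  case (Suc N)
  define M where "M = (\<Sum>j=1..N. t j * b ^ j)"
  define D where "D = (\<Sum>j=1..N. t j)"
  define T where "T = t (Suc N)"
  have canon: "canonical_digits b N t" and T_le: "T \<le> b"
    and T_eq: "T = b \<Longrightarrow> \<forall>i\<in>{1..N}. t i = 0"
    using Suc.prems(1) by (simp_all add: canonical_digits_Suc T_def)
  have M_le: "M \<le> b ^ Suc N"
    using canonical_digits_power_sum_le[OF _ canon] assms(1) by (simp add: M_def)
  have sums: "(\<Sum>j=1..Suc N. t j * b ^ j) = M + T * b ^ Suc N" "(\<Sum>j=1..Suc N. t j) = D + T"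
    by (simp_all add: M_def D_def T_def)
  show ?case
  proof (cases "D = 0")
    case True
    then have "M = 0" by (simp add: M_def D_def)
    have T_pos: "T \<ge> 1" using True Suc.prems(2) sums by simp
    have "T * b ^ Suc N - 1 = (b ^ Suc N - 1) + b ^ Suc N * (T - 1)"
      using T_pos assms(1) by (simp add: algebra_simps diff_mult_distrib2 Suc_leI)
    then have "digit_sum b (T * b ^ Suc N - 1) = Suc N * (b - 1) + (T - 1)"
      using digit_sum_add_mult_power[OF assms(1), of "b ^ Suc N - 1" "Suc N" "T - 1"]
        digit_sum_power_minus_one[OF assms(1), of "Suc N"]
        digit_sum_less[OF assms(1), of "T - 1"] T_le T_pos assms(1)
      by (simp del: power_Suc)
    moreover have "Suc N * (b - 1) \<ge> 1" using assms(1) by simp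
    ultimately show ?thesis using sums True \<open>M = 0\<close> T_pos by simp
  next
    case False
    then have "T \<noteq> b" using T_eq by (auto simp: D_def)
    then have T_less: "T < b" using T_le by simp
    have "D \<le> M" unfolding D_def M_def
      by (rule sum_mono) (use assms(1) in simp)
    then have M_pos: "M \<ge> 1" using False by simp
    have "M + T * b ^ Suc N - 1 = (M - 1) + b ^ Suc N * T"
      using M_pos by (simp add: algebra_simps)
    then have "digit_sum b (M + T * b ^ Suc N - 1) = digit_sum b (M - 1) + T"
      using digit_sum_add_mult_power[OF assms(1), of "M - 1" "Suc N" T] M_le M_pos
        digit_sum_less[OF assms(1) T_less] by simp
    moreover have "D \<le> digit_sum b (M - 1)"
      using Suc.IH[OF canon] False by (simp only: D_def M_def)
    ultimately show ?thesis
      unfolding sums by linarith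
  qed
qed simp

lemma canonical_digits_count_minimal:
  assumes "b \<ge> 2" "canonical_digits b N t"
    and "digit_sum b (D + (b - 1) * (\<Sum>j=1..N. t j * repunit b j)) \<le> D"
  shows "(\<Sum>j=1..N. t j) \<le> D"
proof (rule ccontr)
  define g where "g = (\<Sum>j=1..N. t j * repunit b j)"
  define Dt where "Dt = (\<Sum>j=1..N. t j)"
  assume "\<not> (\<Sum>j=1..N. t j) \<le> D"
  then have D_less: "D < Dt" by (simp add: Dt_def)
  have "(\<Sum>j=1..N. t j * b ^ j) = (\<Sum>j=1..N. (b - 1) * (t j * repunit b j) + t j)"
    using power_eq_repunit[of b] assms(1) by (intro sum.cong) (simp_all add: algebra_simps)
  then have M: "(\<Sum>j=1..N. t j * b ^ j) = (D + (b - 1) * g) + (Dt - D - 1) + 1"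
    using D_less by (simp add: sum.distrib sum_distrib_left g_def Dt_def)
  have "Dt \<le> digit_sum b ((D + (b - 1) * g) + (Dt - D - 1))"
    using canonical_digits_count_le_digit_sum[OF assms(1,2)] D_less M by (simp add: Dt_def)
  also have "\<dots> \<le> digit_sum b (D + (b - 1) * g) + (Dt - D - 1)"
    by (rule digit_sum_add_le[OF assms(1)])
  finally show False using assms(3) D_less by (simp add: g_def)
qed

section \<open>The semigroup \<open>T\<^sub>b(n)\<close>\<close>

lemma monoid_gen_add:
  assumes "x \<in> monoid_gen A" "y \<in> monoid_gen A" shows "x + y \<in> monoid_gen A"
  using assms(2)
proof (induction y rule: monoid_gen.induct)
  case (add y a)
  then show ?case using monoid_gen.add[of "x + y" A a] by (simp add: add.assoc)
qed (simp add: assms(1))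

lemma monoid_gen_mult: "a \<in> A \<Longrightarrow> k * a \<in> monoid_gen A"
proof (induction k)
  case (Suc k)
  then show ?case using monoid_gen.add[OF Suc.IH Suc.prems] by (simp add: add.commute)
qed (simp add: monoid_gen.zero)

lemma monoid_gen_sum:
  "finite F \<Longrightarrow> (\<And>j. j \<in> F \<Longrightarrow> f j \<in> monoid_gen A) \<Longrightarrow> sum f F \<in> monoid_gen A"
  by (induction F rule: finite_induct) (auto intro: monoid_gen.zero monoid_gen_add)

lemma Apery_monoid_gen_add_mult:
  assumes "y \<in> monoid_gen A" "s \<in> A" "y + s * k \<in> Apery (monoid_gen A) s"
  shows "k = 0"
proof (rule ccontr)
  assume "k \<noteq> 0"
  then obtain k' where "k = Suc k'" by (cases k) auto
  then have "y + s * k - s = y + k' * s" "s \<le> y + s * k"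
    by (simp_all add: algebra_simps)
  moreover have "y + k' * s \<in> monoid_gen A"
    using assms(1,2) by (intro monoid_gen_add monoid_gen_mult)
  ultimately show False using assms(3) by (simp add: Apery_def)
qed

text \<open>\<open>s_diff b n = s\<^sub>1 - s\<^sub>0\<close>.\<close>
definition s_diff :: "nat \<Rightarrow> nat \<Rightarrow> nat" where
  "s_diff b n = (b + 1) * b ^ n * (b - 1)"

lemma s_gen_eq_repunit:
  assumes "b \<ge> 1"
  shows "s_gen b n i = s_gen b n 0 + s_diff b n * repunit b i"
proof -
  define P where "P = (b + 1) * b ^ n"
  have "P \<ge> 1" using assms by (simp add: P_def Suc_le_eq)
  have "s_gen b n i = P * b ^ i - 1"
    by (simp add: s_gen_def P_def power_add algebra_simps)
  also have "\<dots> = (P - 1) + P * (b - 1) * repunit b i"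
    using \<open>P \<ge> 1\<close> power_eq_repunit[OF assms, of i] by (simp add: algebra_simps)
  finally show ?thesis by (simp add: s_gen_def s_diff_def P_def)
qed

lemma s_gen_0_eq_repunit:
  assumes "b \<ge> 1"
  shows "s_gen b n 0 = (b - 1) * (repunit b (Suc n) + repunit b n) + 1"
proof -
  have "(b + 1) * b ^ n = b ^ Suc n + b ^ n" by simp
  then show ?thesis
    using power_eq_repunit[OF assms, of n] power_eq_repunit[OF assms, of "Suc n"]
    by (simp add: s_gen_def algebra_simps)
qed

lemma coprime_s_diff_s_gen_0:
  assumes "b \<ge> 2" shows "coprime (s_diff b n) (s_gen b n 0)"
proof -
  have "coprime ((b + 1) * b ^ n) (s_gen b n 0)"
    using coprime_add_one_left[of "s_gen b n 0"] assms by (simp add: s_gen_def)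
  moreover have "coprime (b - 1) ((b - 1) * (repunit b (Suc n) + repunit b n) + 1)"
    by (meson coprime_add_one_right coprime_mult_left_iff)
  ultimately show ?thesis
    using s_gen_0_eq_repunit[of b n] assms by (simp add: s_diff_def)
qed

lemma sum_s_gen_eq:
  assumes "b \<ge> 1"
  shows "(\<Sum>j=1..N. t j * s_gen b n j) =
    s_gen b n 0 * (\<Sum>j=1..N. t j) + s_diff b n * (\<Sum>j=1..N. t j * repunit b j)"
proof -
  have "t j * s_gen b n j = s_gen b n 0 * t j + s_diff b n * (t j * repunit b j)" for j
    using s_gen_eq_repunit[OF assms, of n j] by (simp add: algebra_simps)
  then show ?thesis by (simp add: sum.distrib sum_distrib_left)
qed

lemma sum_s_gen_mem_T_sg: "(\<Sum>j=1..N. t j * s_gen b n j) \<in> T_sg b n"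
  unfolding T_sg_def by (intro monoid_gen_sum monoid_gen_mult) auto

text \<open>Each generator \<open>s\<^sub>i\<close> adds one to the count \<open>D\<close> and \<open>b\<^sup>i = 1 + (b - 1) repunit b i\<close>
  to \<open>D + (b - 1) G\<close>, so the latter is a sum of \<open>D\<close> powers of \<open>b\<close>.\<close>
lemma T_sg_decomp:
  assumes "b \<ge> 2" "x \<in> T_sg b n"
  shows "\<exists>D G. x = s_gen b n 0 * D + s_diff b n * G \<and> digit_sum b (D + (b - 1) * G) \<le> D"
  using assms(2) unfolding T_sg_def
proof (induction x rule: monoid_gen.induct)
  case zero
  then show ?case by (intro exI[of _ 0]) simp
next
  case (add x a)
  obtain D G where x: "x = s_gen b n 0 * D + s_diff b n * G"
    and ds: "digit_sum b (D + (b - 1) * G) \<le> D"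
    using add.IH by blast
  obtain i where a: "a = s_gen b n i" using add.hyps(2) by auto
  have "x + a = s_gen b n 0 * (D + 1) + s_diff b n * (G + repunit b i)"
    using x s_gen_eq_repunit[of b n i] assms(1) by (simp add: a algebra_simps)
  moreover have "D + 1 + (b - 1) * (G + repunit b i) = (D + (b - 1) * G) + b ^ i"
    using power_eq_repunit[of b i] assms(1) by (simp add: distrib_left)
  moreover have "digit_sum b ((D + (b - 1) * G) + b ^ i) \<le> D + 1"
    using digit_sum_add_power_le[OF assms(1), of "D + (b - 1) * G" i] ds by simp
  ultimately show ?case by metis
qed

section \<open>The digit vectors \<open>R\<^sub>b(n)\<close>\<close>

text \<open>With \<open>E = repunit b n\<close>, \<open>repunit b (n + 1) = b E + 1\<close> and \<open>s\<^sub>0 = (b - 1)(b E + 1) + (b - 1) E + 1\<close>;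
  the conditions on the two top digits in \<open>R_set\<close> say exactly that the canonical expansion
  stays below \<open>s\<^sub>0\<close>.\<close>
lemma canonical_digits_top_iff_less_s_gen_0:
  assumes "b \<ge> 2" "n \<ge> 1" "canonical_digits b (n + 1) t"
  shows "(t (n + 1) \<le> b - 1 \<and> (t (n + 1) = b - 1 \<longrightarrow> t n \<le> b - 1 \<and>
            (t n = b - 1 \<longrightarrow> (\<forall>i\<in>{1..n - 1}. t i = 0))))
         \<longleftrightarrow> (\<Sum>j=1..n+1. t j * repunit b j) < s_gen b n 0"
proof -
  obtain m where n: "n = Suc m" using assms(2) by (cases n) auto
  define E where "E = repunit b n"
  define L where "L = (\<Sum>j=1..m. t j * repunit b j)"
  have canon_n: "canonical_digits b n t" and top: "t (n + 1) \<le> b"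
    and top_eq: "t (n + 1) = b \<Longrightarrow> \<forall>i\<in>{1..n}. t i = 0"
    using assms(3) by (simp_all add: canonical_digits_Suc)
  have canon_m: "canonical_digits b m t" and tn: "t n \<le> b"
    and tn_eq: "t n = b \<Longrightarrow> L = 0"
    using canon_n by (simp_all add: canonical_digits_Suc n L_def)
  have L_less: "L < E"
    using canonical_digits_repunit_sum_le[OF _ canon_m] assms(1) by (simp add: L_def E_def n)
  have value_eq: "(\<Sum>j=1..n+1. t j * repunit b j) = L + t n * E + t (n + 1) * (b * E + 1)"
    by (simp add: L_def E_def n)
  have s0: "s_gen b n 0 = (b - 1) * (b * E + 1) + (b - 1) * E + 1"
    using s_gen_0_eq_repunit[of b n] assms(1) by (simp add: E_def distrib_left)
  have L0: "L = 0 \<longleftrightarrow> (\<forall>i\<in>{1..n - 1}. t i = 0)"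
    using repunit_sum_eq_0_iff[where t=t and N=m and b=b] by (simp only: L_def n diff_Suc_1)
  have b_split: "(b - 1) * X + X = b * X" for X
    using diff_one_mult_add_self[of b] assms(1) by simp
  have E_pos: "E \<ge> 1" using repunit_pos[OF assms(2)] by (simp add: E_def)
  have "(t (n + 1) \<le> b - 1 \<and> (t (n + 1) = b - 1 \<longrightarrow> t n \<le> b - 1 \<and> (t n = b - 1 \<longrightarrow> L = 0)))
    \<longleftrightarrow> L + t n * E + t (n + 1) * (b * E + 1) < (b - 1) * (b * E + 1) + (b - 1) * E + 1"
  proof (cases "t (n + 1) = b - 1")
    case top_eq: True
    show ?thesis
    proof (cases "t n = b - 1")
      case True
      then show ?thesis using top_eq by auto
    next
      case False
      then show ?thesis
      proof (cases "t n = b")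
        case True
        then show ?thesis using top_eq tn_eq b_split[of E] E_pos assms(1) by auto
      next
        case False
        then have tn_less: "t n + 1 \<le> b - 1" using \<open>t n \<noteq> b - 1\<close> tn by simp
        then have "(t n + 1) * E \<le> (b - 1) * E" by (rule mult_right_mono) simp
        then show ?thesis using top_eq tn_less L_less by auto
      qed
    qed
  next
    case False
    then show ?thesis
    proof (cases "t (n + 1) = b")
      case True
      then have "b * (b * E + 1) \<le> L + t n * E + t (n + 1) * (b * E + 1)" by simp
      then have "\<not> L + t n * E + t (n + 1) * (b * E + 1) < (b - 1) * (b * E + 1) + (b - 1) * E + 1"
        using b_split[of "b * E + 1"] b_split[of E] by linarith
      then show ?thesis using True assms(1) by simp
    next
      case False
      then have top_less: "t (n + 1) + 1 \<le> b - 1" using \<open>t (n + 1) \<noteq> b - 1\<close> top by simp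
      then have "t (n + 1) * (b * E + 1) + (b * E + 1) \<le> (b - 1) * (b * E + 1)"
        using mult_right_mono[OF top_less, of "b * E + 1"] by (simp add: distrib_right)
      moreover have "L + t n * E \<le> b * E"
        using canonical_digits_repunit_sum_le[OF _ canon_n] assms(1) by (simp add: L_def E_def n)
      ultimately have "L + t n * E + t (n + 1) * (b * E + 1) < (b - 1) * (b * E + 1) + (b - 1) * E + 1"
        by linarith
      then show ?thesis using top_less by simp
    qed
  qed
  then show ?thesis unfolding value_eq s0 L0 .
qed

lemma R_set_iff:
  assumes "b \<ge> 2" "n \<ge> 1"
  shows "t \<in> R_set b n \<longleftrightarrow> canonical_digits b (n + 1) t \<and> (\<forall>j. j \<notin> {1..n+1} \<longrightarrow> t j = 0)
           \<and> (\<Sum>j=1..n+1. t j * repunit b j) < s_gen b n 0"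
proof -
  have "t \<in> R_set b n \<longleftrightarrow> canonical_digits b (n + 1) t \<and> (\<forall>j. j \<notin> {1..n+1} \<longrightarrow> t j = 0)
      \<and> t (n + 1) \<le> b - 1 \<and> (t (n + 1) = b - 1 \<longrightarrow> t n \<le> b - 1 \<and>
            (t n = b - 1 \<longrightarrow> (\<forall>i\<in>{1..n - 1}. t i = 0)))"
    by (auto simp: R_set_def canonical_digits_def)
  then show ?thesis
    using canonical_digits_top_iff_less_s_gen_0[OF assms] by blast
qed

lemma R_set_count_less_s_diff:
  assumes "b \<ge> 2" "t \<in> R_set b n"
  shows "(\<Sum>j=1..n+1. t j) < s_diff b n"
proof -
  have "n < 2 ^ n" by (rule less_exp)
  moreover have "(2::nat) ^ n \<le> b ^ n" using assms(1) by (intro power_mono) simp_all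
  ultimately have n_le: "n + 1 \<le> b ^ n" by linarith
  have "(\<Sum>j=1..n+1. t j) \<le> of_nat (card {1..n+1}) * b"
    by (rule sum_bounded_above) (use assms(2) in \<open>unfold R_set_def, blast\<close>)
  also have "\<dots> = (n + 1) * b" by simp
  also have "\<dots> \<le> b ^ n * b" using n_le by (rule mult_right_mono) simp
  also have "\<dots> < (b + 1) * b ^ n" using assms(1) by simp
  also have "\<dots> \<le> s_diff b n" using assms(1) by (simp add: s_diff_def)
  finally show ?thesis .
qed

text \<open>Shifting \<open>G\<close> by \<open>s\<^sub>0 m\<close> is paid for by \<open>K m\<close> copies of \<open>s\<^sub>0\<close>; for \<open>m > 0\<close> these alone
  outnumber the generators used by \<open>t\<close>.\<close>
lemma R_set_count_le:
  assumes "b \<ge> 2" "n \<ge> 1" "t \<in> R_set b n"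
    and "digit_sum b (D + (b - 1) * ((\<Sum>j=1..n+1. t j * repunit b j) + s_gen b n 0 * m)) \<le> D"
  shows "(\<Sum>j=1..n+1. t j) \<le> D + s_diff b n * m"
proof (cases "m = 0")
  case True
  have "canonical_digits b (n + 1) t" using assms(3) R_set_iff[OF assms(1,2)] by blast
  from canonical_digits_count_minimal[OF assms(1) this, of D] show ?thesis
    using assms(4) True by simp
next
  case False
  then have "s_diff b n \<le> s_diff b n * m" by simp
  then show ?thesis
    using R_set_count_less_s_diff[OF assms(1,3)] by linarith
qed

lemma ex_R_set_repunit_sum_eq:
  assumes "b \<ge> 2" "n \<ge> 1" "g < s_gen b n 0"
  shows "\<exists>t\<in>R_set b n. (\<Sum>j=1..n+1. t j * repunit b j) = g"
proof -
  define E where "E = repunit b n"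
  have s0: "s_gen b n 0 = (b - 1) * (b * E + 1) + (b - 1) * E + 1"
    using s_gen_0_eq_repunit[of b n] assms(1) by (simp add: E_def distrib_left)
  have "(b - 1) * (b * E + 1) + (b * E + 1) = b * (b * E + 1)"
    using diff_one_mult_add_self[of b] assms(1) by simp
  moreover have "(b - 1) * E \<le> b * E" by simp
  ultimately have "g \<le> b * (b * E + 1)"
    using assms(3) s0 by linarith
  then have "g \<le> b * repunit b (n + 1)" by (simp add: E_def)
  then obtain t where "canonical_digits b (n + 1) t" "\<forall>j. j \<notin> {1..n+1} \<longrightarrow> t j = 0"
    "(\<Sum>j=1..n+1. t j * repunit b j) = g"
    using ex_canonical_digits[of b g "n + 1"] assms(1) by auto
  then show ?thesis
    using R_set_iff[OF assms(1,2)] assms(3) by auto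
qed

section \<open>The Apery set\<close>

lemma coprime_lincomb_eq_nat:
  fixes p q g G x y :: nat
  assumes "coprime p q" "g < q" "q * x + p * g = q * y + p * G"
  shows "\<exists>m. G = g + q * m \<and> x = y + p * m"
proof -
  have "[p * g = p * G] (mod q)"
    using arg_cong[OF assms(3), of "\<lambda>z. z mod q"] by (simp add: cong_def)
  then have "G mod q = g"
    using cong_mult_lcancel_nat[OF assms(1)] assms(2) by (simp add: cong_def)
  then obtain m where G: "G = g + q * m"
    by (metis mod_mult_div_eq add.commute)
  then have "q * x = q * (y + p * m)"
    using assms(3) by (simp add: algebra_simps)
  then show ?thesis
    using G assms(2) by auto
qed

lemma sum_s_gen_mem_Apery:
  assumes "b \<ge> 2" "n \<ge> 1" "t \<in> R_set b n"
  shows "(\<Sum>j=1..n+1. t j * s_gen b n j) \<in> Apery (T_sg b n) (s_gen b n 0)"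
proof -
  define x where "x = (\<Sum>j=1..n+1. t j * s_gen b n j)"
  define g where "g = (\<Sum>j=1..n+1. t j * repunit b j)"
  define Dt where "Dt = (\<Sum>j=1..n+1. t j)"
  have x: "x = s_gen b n 0 * Dt + s_diff b n * g"
    using sum_s_gen_eq[where N="n + 1" and t=t and n=n] assms(1) by (simp add: x_def g_def Dt_def)
  have g_less: "g < s_gen b n 0"
    using R_set_iff[OF assms(1,2)] assms(3) unfolding g_def by blast
  have "\<not> (s_gen b n 0 \<le> x \<and> x - s_gen b n 0 \<in> T_sg b n)"
  proof
    assume pred: "s_gen b n 0 \<le> x \<and> x - s_gen b n 0 \<in> T_sg b n"
    then obtain D G where DG: "x - s_gen b n 0 = s_gen b n 0 * D + s_diff b n * G"
      and ds: "digit_sum b (D + (b - 1) * G) \<le> D"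
      using T_sg_decomp[OF assms(1)] by blast
    have "x = s_gen b n 0 + (x - s_gen b n 0)" using pred by simp
    also have "\<dots> = s_gen b n 0 * (D + 1) + s_diff b n * G" using DG by simp
    finally have "s_gen b n 0 * Dt + s_diff b n * g = s_gen b n 0 * (D + 1) + s_diff b n * G"
      using x by simp
    then obtain m where "G = g + s_gen b n 0 * m" "Dt = D + 1 + s_diff b n * m"
      using coprime_lincomb_eq_nat[OF coprime_s_diff_s_gen_0[OF assms(1)] g_less] by blast
    moreover have "Dt \<le> D + s_diff b n * m"
      using R_set_count_le[OF assms, of D m] ds calculation(1) by (simp add: g_def Dt_def)
    ultimately show False by simp
  qed
  moreover have "x \<in> T_sg b n" unfolding x_def by (rule sum_s_gen_mem_T_sg)
  ultimately show ?thesis unfolding x_def[symmetric] Apery_def by blast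
qed

lemma T_sg_eq_R_set_sum_add_mult:
  assumes "b \<ge> 2" "n \<ge> 1" "x \<in> T_sg b n"
  shows "\<exists>t\<in>R_set b n. \<exists>k. x = (\<Sum>j=1..n+1. t j * s_gen b n j) + s_gen b n 0 * k"
proof -
  obtain D G where x: "x = s_gen b n 0 * D + s_diff b n * G"
    and ds: "digit_sum b (D + (b - 1) * G) \<le> D"
    using T_sg_decomp[OF assms(1,3)] by blast
  have s0_pos: "s_gen b n 0 > 0"
    using s_gen_0_eq_repunit[of b n] assms(1) by simp
  define m where "m = G div s_gen b n 0"
  define g where "g = G mod s_gen b n 0"
  have G: "G = g + s_gen b n 0 * m" by (simp add: m_def g_def)
  have "g < s_gen b n 0" using s0_pos by (simp add: g_def)
  then obtain t where t: "t \<in> R_set b n" and g: "(\<Sum>j=1..n+1. t j * repunit b j) = g"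
    using ex_R_set_repunit_sum_eq[OF assms(1,2)] by blast
  define Dt where "Dt = (\<Sum>j=1..n+1. t j)"
  define v where "v = (\<Sum>j=1..n+1. t j * s_gen b n j)"
  have v: "v = s_gen b n 0 * Dt + s_diff b n * g"
    using sum_s_gen_eq[where N="n + 1" and t=t and n=n] assms(1) g by (simp add: v_def Dt_def)
  have "Dt \<le> D + s_diff b n * m"
    using R_set_count_le[OF assms(1,2) t, of D m] ds G g by (simp add: Dt_def)
  then obtain k where k: "D + s_diff b n * m = Dt + k" using le_Suc_ex by blast
  have "x = s_gen b n 0 * (D + s_diff b n * m) + s_diff b n * g"
    using x G by (simp add: algebra_simps)
  also have "\<dots> = v + s_gen b n 0 * k"
    using k v by (simp add: algebra_simps)
  finally show ?thesis using t unfolding v_def by blast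
qed

lemma Apery_T_sg_ex_R_set:
  assumes "b \<ge> 2" "n \<ge> 1" "x \<in> Apery (T_sg b n) (s_gen b n 0)"
  shows "\<exists>t\<in>R_set b n. x = (\<Sum>j=1..n+1. t j * s_gen b n j)"
proof -
  have "x \<in> T_sg b n" using assms(3) by (simp add: Apery_def)
  then obtain t k where t: "t \<in> R_set b n" and x: "x = (\<Sum>j=1..n+1. t j * s_gen b n j) + s_gen b n 0 * k"
    using T_sg_eq_R_set_sum_add_mult[OF assms(1,2)] by blast
  have "(\<Sum>j=1..n+1. t j * s_gen b n j) \<in> monoid_gen (range (s_gen b n))"
    using sum_s_gen_mem_T_sg unfolding T_sg_def .
  moreover have "s_gen b n 0 \<in> range (s_gen b n)" by simp
  moreover have "x \<in> Apery (monoid_gen (range (s_gen b n))) (s_gen b n 0)"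
    using assms(3) by (simp add: T_sg_def)
  ultimately have "k = 0" unfolding x by (rule Apery_monoid_gen_add_mult)
  then show ?thesis using t x by auto
qed

theorem mainTheorem3:
  fixes b n :: nat
  assumes "b \<ge> 2" and "n \<ge> 1"
  shows "Apery (T_sg b n) (s_gen b n 0) =
           {\<Sum>j=1..n+1. t j * s_gen b n j | t. t \<in> R_set b n}"
  using Apery_T_sg_ex_R_set[OF assms] sum_s_gen_mem_Apery[OF assms] by blast

end
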